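(* For every base $b\ge 2$ there exist infinitely many positive integers that are not $b$-wMRH numbers.
   Context: Fix a base $b\ge 2$. $s_b(N)$ is the sum of the base-$b$ digits of $N$. For a positive integer $X$, its reversal $X^R$ is the integer whose base-$b$ representation is that of $X$ written in reverse order (leading zeros of the result are dropped). A positive integer $N$ is a $b$-wMRH number if there exists an integer $A\ge 0$ such that $N=(A+s_b(N))\cdot(A+s_b(N))^R$. *)

theory Defs
  imports Main
begin

fun digits :: "nat \<Rightarrow> nat \<Rightarrow> nat list" where
  "digits b n = (if b < 2 \<or> n = 0 then [] else n mod b # digits b (n div b))"

declare digits.simps[simp del]

definition digit_sum :: "nat \<Rightarrow> nat \<Rightarrow> nat" where
  "digit_sum b n = sum_list (digits b n)"

fun from_digits :: "nat \<Rightarrow> nat list \<Rightarrow> nat" where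
  "from_digits b [] = 0"
| "from_digits b (d # ds) = d + b * from_digits b ds"

text \<open>Reversal: reading the base-b representation backwards; leading zeros vanish automatically.\<close>
definition reversal :: "nat \<Rightarrow> nat \<Rightarrow> nat" where
  "reversal b x = from_digits b (rev (digits b x))"

definition wMRH :: "nat \<Rightarrow> nat \<Rightarrow> bool" where
  "wMRH b N \<longleftrightarrow> N > 0 \<and>
     (\<exists>A::nat. N = (A + digit_sum b N) * reversal b (A + digit_sum b N))"

end

theory Submission
  imports Defs "HOL-Computational_Algebra.Primes"
begin

text \<open>Every prime \<open>p \<noteq> b\<close> fails to be a \<open>b\<close>-wMRH number. In a factorisation
  \<open>p = X \<cdot> X\<^sup>R\<close> one factor is \<open>1\<close>. If \<open>X = 1\<close> then \<open>p = 1\<close>; if \<open>X\<^sup>R = 1\<close> then \<open>X = p\<close> is not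
  divisible by \<open>b\<close>, so its nonzero last digit \<open>X mod b\<close> becomes the leading digit of \<open>X\<^sup>R\<close>;
  then \<open>X\<^sup>R = 1\<close> forces \<open>X\<close> to be a single digit, whence \<open>p = X = X\<^sup>R = 1\<close>.\<close>

lemma digits_pos: "b \<ge> 2 \<Longrightarrow> X > 0 \<Longrightarrow> digits b X = X mod b # digits b (X div b)"
  by (subst digits.simps) auto

lemma digits_eq_Nil_iff: "b \<ge> 2 \<Longrightarrow> digits b X = [] \<longleftrightarrow> X = 0"
  by (subst digits.simps) auto

lemma from_digits_snoc: "from_digits b (xs @ [d]) = from_digits b xs + b ^ length xs * d"
  by (induction xs) (auto simp: algebra_simps)

lemma reversal_digit:
  assumes "b \<ge> 2" and "0 < X" and "X < b"
  shows "reversal b X = X"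
proof -
  have "digits b X = [X]"
    using assms digits_pos[of b X] digits_eq_Nil_iff[of b 0] by simp
  then show ?thesis
    unfolding reversal_def by simp
qed

lemma reversal_ge_last_digit:
  assumes "b \<ge> 2" and "X > 0"
  shows "b ^ length (digits b (X div b)) * (X mod b) \<le> reversal b X"
  unfolding reversal_def using digits_pos[OF assms] by (simp add: from_digits_snoc)

lemma reversal_eq_1_imp:
  assumes b: "b \<ge> 2" and ndvd: "\<not> b dvd X" and R: "reversal b X = 1"
  shows "X = 1"
proof -
  have X0: "X > 0"
    using ndvd by (cases X) auto
  let ?k = "length (digits b (X div b))"
  have "b ^ ?k \<le> b ^ ?k * (X mod b)"
    using ndvd by (simp add: dvd_eq_mod_eq_0)
  also have "\<dots> \<le> 1"
    using reversal_ge_last_digit[OF b X0] R by simp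
  finally have "?k = 0"
    using b one_less_power[of b ?k] by linarith
  then have "X < b"
    using b digits_eq_Nil_iff[OF b] by (simp add: div_eq_0_iff)
  then show ?thesis
    using reversal_digit[OF b X0] R by simp
qed

lemma prime_not_wMRH:
  assumes b: "b \<ge> 2" and p: "prime (p::nat)" and "p \<noteq> b"
  shows "\<not> wMRH b p"
proof
  assume "wMRH b p"
  then obtain X where p_eq: "p = X * reversal b X"
    unfolding wMRH_def by blast
  have "b \<noteq> 1"
    using b by simp
  then have ndvd: "\<not> b dvd p"
    using p \<open>p \<noteq> b\<close> by (auto simp: prime_nat_iff)
  consider "X = 1" | "reversal b X = 1"
    using p p_eq prime_product by metis
  then show False
  proof cases
    case 1
    then show False
      using p p_eq reversal_digit[OF b, of 1] b by simp
  next
    case 2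
    then have "X = p"
      using p_eq by simp
    then show False
      using reversal_eq_1_imp[OF b ndvd] 2 p by simp
  qed
qed

theorem proposition16:
  fixes b :: nat
  assumes "b \<ge> 2"
  shows "infinite {N::nat. N > 0 \<and> \<not> wMRH b N}"
proof -
  have "{p. prime p} - {b} \<subseteq> {N::nat. N > 0 \<and> \<not> wMRH b N}"
    using prime_not_wMRH[OF assms] prime_gt_0_nat by auto
  moreover have "infinite ({p::nat. prime p} - {b})"
    using primes_infinite by simp
  ultimately show ?thesis
    using infinite_super by blast
qed

end
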